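(* Let $(G,u)$ be a unital po-group and $m:G\to\mathbb R$ a group homomorphism (signed measure on $G$). Then $m$ is relatively bounded if and only if $m$ is bounded on the interval $[0,nu]=\{g\in G:0\le g\le nu\}$ for every integer $n\ge1$. If, in addition, $G$ satisfies (RDP), then $m$ is relatively bounded if and only if $m$ is bounded on $[0,u]$.
   Context: A po-group is a (not necessarily Abelian) group $G$ with a partial order $\le$ such that $a\le b$ implies $x+a+y\le x+b+y$ for all $x,y$; $G^+$ is its positive cone. An element $u\in G^+$ is a strong unit if for every $g\in G$ there is $n\ge1$ with $g\le nu$; $(G,u)$ is then a unital po-group. A map $m:G\to\mathbb R$ is relatively bounded if for every subset $W\subseteq G$ bounded above and below in $G$, the set $m(W)$ is bounded in $\mathbb R$. $G$ satisfies (RDP) if for all $a_1,a_2,b_1,b_2\in G^+$ with $a_1+a_2=b_1+b_2$ there exist $d_1,d_2,d_3,d_4\in G^+$ with $d_1+d_2=a_1$, $d_3+d_4=a_2$, $d_1+d_3=b_1$, $d_2+d_4=b_2$. *)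

theory Defs
  imports Main "HOL-Library.Lattice_Algebras" Complex_Main
begin

definition po_group :: "('a::group_add \<Rightarrow> 'a \<Rightarrow> bool) \<Rightarrow> bool" where
  "po_group le \<longleftrightarrow>
     (\<forall>a. le a a) \<and>
     (\<forall>a b. le a b \<and> le b a \<longrightarrow> a = b) \<and>
     (\<forall>a b c. le a b \<and> le b c \<longrightarrow> le a c) \<and>
     (\<forall>a b x y. le a b \<longrightarrow> le (x + a + y) (x + b + y))"

primrec nmul :: "nat \<Rightarrow> 'a::monoid_add \<Rightarrow> 'a" where
  "nmul 0 u = 0"
| "nmul (Suc n) u = nmul n u + u"

definition strong_unit :: "('a::group_add \<Rightarrow> 'a \<Rightarrow> bool) \<Rightarrow> 'a \<Rightarrow> bool" where
  "strong_unit le u \<longleftrightarrow> le 0 u \<and> (\<forall>g. \<exists>n\<ge>1. le g (nmul n u))"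

definition unital_po_group :: "('a::group_add \<Rightarrow> 'a \<Rightarrow> bool) \<Rightarrow> 'a \<Rightarrow> bool" where
  "unital_po_group le u \<longleftrightarrow> po_group le \<and> strong_unit le u"

definition group_hom_real :: "('a::group_add \<Rightarrow> real) \<Rightarrow> bool" where
  "group_hom_real m \<longleftrightarrow> (\<forall>a b. m (a + b) = m a + m b)"

definition bdd_real_set :: "real set \<Rightarrow> bool" where
  "bdd_real_set S \<longleftrightarrow> bdd_above S \<and> bdd_below S"

definition relatively_bounded :: "('a::group_add \<Rightarrow> 'a \<Rightarrow> bool) \<Rightarrow> ('a \<Rightarrow> real) \<Rightarrow> bool" where
  "relatively_bounded le m \<longleftrightarrow>
     (\<forall>W. (\<exists>a b. \<forall>w\<in>W. le a w \<and> le w b) \<longrightarrow> bdd_real_set (m ` W))"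

definition po_interval :: "('a::group_add \<Rightarrow> 'a \<Rightarrow> bool) \<Rightarrow> 'a \<Rightarrow> 'a \<Rightarrow> 'a set" where
  "po_interval le a b = {g. le a g \<and> le g b}"

definition RDP :: "('a::group_add \<Rightarrow> 'a \<Rightarrow> bool) \<Rightarrow> bool" where
  "RDP le \<longleftrightarrow>
     (\<forall>a1 a2 b1 b2. le 0 a1 \<and> le 0 a2 \<and> le 0 b1 \<and> le 0 b2 \<and> a1 + a2 = b1 + b2 \<longrightarrow>
        (\<exists>d1 d2 d3 d4. le 0 d1 \<and> le 0 d2 \<and> le 0 d3 \<and> le 0 d4 \<and>
           d1 + d2 = a1 \<and> d3 + d4 = a2 \<and> d1 + d3 = b1 \<and> d2 + d4 = b2))"

end

theory Submission
  imports Defs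
begin

(* A set W bounded by a \<le> w \<le> b is carried by the translation w \<mapsto> w - a
   into the interval [0, b - a], and b - a \<le> N u for some N because u is a strong unit;
   since m is additive, m is bounded on W as soon as it is bounded on [0, N u].
   Under (RDP) the Riesz decomposition property holds: every 0 \<le> x \<le> y1 + y2 with
   y1, y2 \<ge> 0 splits as x = x1 + x2 with 0 \<le> xi \<le> yi.  Consequently a bound C for |m|
   on [0, u] yields the bound n C on [0, n u], so boundedness on [0, u] suffices. *)

lemma bdd_real_set_iff_abs: "bdd_real_set S \<longleftrightarrow> (\<exists>C. \<forall>x\<in>S. \<bar>x\<bar> \<le> C)"
proof
  assume "bdd_real_set S"
  then obtain A B where "\<forall>x\<in>S. x \<le> A" "\<forall>x\<in>S. B \<le> x"
    unfolding bdd_real_set_def bdd_above_def bdd_below_def by blast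
  then have "\<forall>x\<in>S. \<bar>x\<bar> \<le> \<bar>A\<bar> + \<bar>B\<bar>" by force
  then show "\<exists>C. \<forall>x\<in>S. \<bar>x\<bar> \<le> C" by blast
next
  assume "\<exists>C. \<forall>x\<in>S. \<bar>x\<bar> \<le> C"
  then obtain C where "\<forall>x\<in>S. \<bar>x\<bar> \<le> C" by blast
  then have "\<forall>x\<in>S. x \<le> C" "\<forall>x\<in>S. -C \<le> x" by force+
  then show "bdd_real_set S"
    unfolding bdd_real_set_def bdd_above_def bdd_below_def by blast
qed

lemma group_hom_real_zero: "group_hom_real m \<Longrightarrow> m 0 = 0"
  unfolding group_hom_real_def by (metis add_0 add_cancel_right_right)

lemma group_hom_real_diff:
  assumes "group_hom_real m"
  shows "m w = m (w + - a) + m a"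
  using assms unfolding group_hom_real_def by (metis add.assoc add.left_inverse add_0_right)

lemma po_group_refl: "po_group le \<Longrightarrow> le a a"
  unfolding po_group_def by blast

lemma po_group_antisym: "po_group le \<Longrightarrow> le a b \<Longrightarrow> le b a \<Longrightarrow> a = b"
  unfolding po_group_def by blast

lemma po_group_trans: "po_group le \<Longrightarrow> le a b \<Longrightarrow> le b c \<Longrightarrow> le a c"
  unfolding po_group_def by blast

lemma po_group_translate: "po_group le \<Longrightarrow> le a b \<Longrightarrow> le (x + a + y) (x + b + y)"
  unfolding po_group_def by blast

lemma po_group_le_add_pos:
  assumes "po_group le" "le 0 d"
  shows "le a (a + d)"
  using po_group_translate[OF assms, of a 0] by simp

lemma po_group_add_pos:
  assumes "po_group le" "le 0 a" "le 0 b"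
  shows "le 0 (a + b)"
  using assms po_group_trans po_group_le_add_pos by blast

lemma nmul_pos:
  assumes "po_group le" "le 0 u"
  shows "le 0 (nmul n u)"
  by (induction n) (simp_all add: assms po_group_refl po_group_add_pos)

lemma po_group_shift_interval:
  assumes "po_group le" "le a w" "le w b"
  shows "le 0 (w + - a)" "le (w + - a) (b + - a)"
  using po_group_translate[OF assms(1,2), of 0 "-a"]
        po_group_translate[OF assms(1,3), of 0 "-a"] by simp_all

lemma relatively_bounded_interval:
  assumes "relatively_bounded le m"
  shows "bdd_real_set (m ` po_interval le a b)"
proof -
  have "\<forall>w\<in>po_interval le a b. le a w \<and> le w b" by (simp add: po_interval_def)
  then show ?thesis using assms unfolding relatively_bounded_def by blast
qed

text \<open>Conversely, for a strong unit u, boundedness of m on all [0, n u] gives relative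
  boundedness: a set between a and b is translated into [0, N u] with b - a \<le> N u.\<close>
lemma relatively_bounded_from_unit_intervals:
  assumes po: "po_group le" and su: "strong_unit le u" and hom: "group_hom_real m"
    and bdd: "\<forall>n::nat. n \<ge> 1 \<longrightarrow> bdd_real_set (m ` po_interval le 0 (nmul n u))"
  shows "relatively_bounded le m"
  unfolding relatively_bounded_def
proof (intro allI impI)
  fix W assume "\<exists>a b. \<forall>w\<in>W. le a w \<and> le w b"
  then obtain a b where ab: "\<And>w. w \<in> W \<Longrightarrow> le a w \<and> le w b" by blast
  obtain N where N: "N \<ge> 1" "le (b + - a) (nmul N u)"
    using su unfolding strong_unit_def by blast
  obtain C where C: "\<And>x. x \<in> po_interval le 0 (nmul N u) \<Longrightarrow> \<bar>m x\<bar> \<le> C"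
    using bdd N(1) unfolding bdd_real_set_iff_abs by blast
  have "\<bar>m w\<bar> \<le> C + \<bar>m a\<bar>" if w: "w \<in> W" for w
  proof -
    have "le 0 (w + - a)" "le (w + - a) (b + - a)"
      using po_group_shift_interval[OF po] ab[OF w] by blast+
    then have "w + - a \<in> po_interval le 0 (nmul N u)"
      using po_group_trans[OF po _ N(2)] unfolding po_interval_def by blast
    then have "\<bar>m (w + - a)\<bar> \<le> C" by (rule C)
    then show ?thesis using group_hom_real_diff[OF hom, of w a] by linarith
  qed
  then show "bdd_real_set (m ` W)" unfolding bdd_real_set_iff_abs by blast
qed

lemma RDP_riesz_decomposition:
  assumes po: "po_group le" and rdp: "RDP le"
    and x: "le 0 x" "le x (y1 + y2)" and y: "le 0 y1" "le 0 y2"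
  shows "\<exists>x1 x2. x = x1 + x2 \<and> le 0 x1 \<and> le x1 y1 \<and> le 0 x2 \<and> le x2 y2"
proof -
  have "le (- x + x + 0) (- x + (y1 + y2) + 0)"
    using po_group_translate[OF po x(2)] by blast
  then have rest: "le 0 (- x + (y1 + y2))" by simp
  have sum: "x + (- x + (y1 + y2)) = y1 + y2" by (simp add: add.assoc[symmetric])
  obtain d1 d2 d3 d4 where d: "le 0 d1" "le 0 d2" "le 0 d3" "le 0 d4"
      "d1 + d2 = x" "d1 + d3 = y1" "d2 + d4 = y2"
    using rdp x(1) rest y sum unfolding RDP_def by metis
  have "le d1 y1" "le d2 y2"
    using po_group_le_add_pos[OF po d(3), of d1] po_group_le_add_pos[OF po d(4), of d2] d(6,7)
    by simp_all
  then show ?thesis using d(1,2,5) by blast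
qed

lemma RDP_interval_bound_add:
  assumes po: "po_group le" and rdp: "RDP le" and hom: "group_hom_real m"
    and pos: "le 0 a" "le 0 b"
    and bound_a: "\<And>x. le 0 x \<Longrightarrow> le x a \<Longrightarrow> \<bar>m x\<bar> \<le> A"
    and bound_b: "\<And>x. le 0 x \<Longrightarrow> le x b \<Longrightarrow> \<bar>m x\<bar> \<le> B"
    and x: "le 0 x" "le x (a + b)"
  shows "\<bar>m x\<bar> \<le> A + B"
proof -
  obtain x1 x2 where xs: "x = x1 + x2" "le 0 x1" "le x1 a" "le 0 x2" "le x2 b"
    using RDP_riesz_decomposition[OF po rdp x pos] by blast
  have "m x = m x1 + m x2" using hom xs(1) unfolding group_hom_real_def by simp
  then show ?thesis using bound_a[OF xs(2,3)] bound_b[OF xs(4,5)] by linarith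
qed

lemma RDP_unit_interval_bound:
  assumes po: "po_group le" and rdp: "RDP le" and hom: "group_hom_real m" and u: "le 0 u"
    and bound: "\<And>x. le 0 x \<Longrightarrow> le x u \<Longrightarrow> \<bar>m x\<bar> \<le> C"
  shows "le 0 x \<Longrightarrow> le x (nmul n u) \<Longrightarrow> \<bar>m x\<bar> \<le> real n * C"
proof (induction n arbitrary: x)
  case 0
  then have "x = 0" using po_group_antisym[OF po] by simp
  then show ?case using group_hom_real_zero[OF hom] by simp
next
  case (Suc n)
  have "\<bar>m x\<bar> \<le> real n * C + C"
    using RDP_interval_bound_add[OF po rdp hom nmul_pos[OF po u] u Suc.IH bound] Suc.prems
    by simp
  then show ?case by (simp add: algebra_simps)
qed

theorem lemma3p2:
  fixes le :: "'a::group_add \<Rightarrow> 'a \<Rightarrow> bool" and u :: 'a and m :: "'a \<Rightarrow> real"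
  assumes "unital_po_group le u"
    and "group_hom_real m"
  shows "(relatively_bounded le m \<longleftrightarrow>
            (\<forall>n::nat. n \<ge> 1 \<longrightarrow> bdd_real_set (m ` po_interval le 0 (nmul n u))))
       \<and> (RDP le \<longrightarrow>
            (relatively_bounded le m \<longleftrightarrow> bdd_real_set (m ` po_interval le 0 u)))"
proof -
  have po: "po_group le" and su: "strong_unit le u" and u: "le 0 u"
    using assms(1) unfolding unital_po_group_def strong_unit_def by auto
  have unit_intervals: "relatively_bounded le m \<longleftrightarrow>
            (\<forall>n::nat. n \<ge> 1 \<longrightarrow> bdd_real_set (m ` po_interval le 0 (nmul n u)))"
    using relatively_bounded_interval relatively_bounded_from_unit_intervals[OF po su assms(2)]
    by blast
  moreover have "relatively_bounded le m \<longleftrightarrow> bdd_real_set (m ` po_interval le 0 u)"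
    if rdp: "RDP le"
  proof
    assume "bdd_real_set (m ` po_interval le 0 u)"
    then obtain C where "\<And>x. le 0 x \<Longrightarrow> le x u \<Longrightarrow> \<bar>m x\<bar> \<le> C"
      unfolding bdd_real_set_iff_abs po_interval_def by blast
    then have "\<forall>n::nat. bdd_real_set (m ` po_interval le 0 (nmul n u))"
      using RDP_unit_interval_bound[OF po rdp assms(2) u]
      unfolding bdd_real_set_iff_abs po_interval_def by blast
    then show "relatively_bounded le m" using unit_intervals by blast
  qed (rule relatively_bounded_interval)
  ultimately show ?thesis by blast
qed

end
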